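(* Let $G=(V,E,w)$ be a weighted undirected graph with $n$ vertices and positive edge weights, let $h,k$ be natural numbers, $\varepsilon>0$, and $c\ge1$ a constant. Let $S\subseteq V$ be obtained by including each vertex independently with probability $\min((c+2)\log n/h,1)$. Let $\tilde d(s,v)$, for $(s,v)\in S\times V$, be estimates satisfying $d(s,v)\le\tilde d(s,v)\le(1+\varepsilon)d^{2h}(s,v)$ for all $(s,v)\in S\times V$. Let $H$ be the weighted graph on vertex set $S$ having an edge $\{s,s'\}$ whenever the estimated distance between $s$ and $s'$ is finite, with weight equal to that estimate, let $H'$ be any $(2k-1)$-spanner of $H$, and for $s\in S$, $v\in V$ define $d_{out}(s,v)=\min_{s'\in S}\big(d_{H'}(s,s')+\tilde d(s',v)\big)$. Then, with high probability (over the choice of $S$), $d(s,v)\le d_{out}(s,v)\le(2k-1)(1+\varepsilon)\,d(s,v)$ for all $(s,v)\in S\times V$.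
   Context: $d(s,v)$ is the weighted distance in $G$, and $d^{h}(s,v)$ is the $h$-hop distance, the minimum weight of an $s$–$v$ path with at most $h$ edges ($\infty$ if none). A $(2k-1)$-spanner of $H$ is a subgraph $H'$ on the same vertex set with $d_{H'}(x,y)\le(2k-1)d_H(x,y)$ for all $x,y$; $d_{H'}(s,s)=0$. Logarithms are base $2$. "With high probability" means with probability at least $1-n^{-c}$ (up to constant changes in the exponent). *)

theory Defs
  imports "HOL-Probability.Probability"
begin

definition weighted_graph :: "'a set \<Rightarrow> ('a \<times> 'a) set \<Rightarrow> ('a \<Rightarrow> 'a \<Rightarrow> real) \<Rightarrow> bool" where
  "weighted_graph V E w \<longleftrightarrow> finite V \<and> E \<subseteq> V \<times> V \<and> sym E \<and>
     (\<forall>(u,v)\<in>E. w u v = w v u \<and> w u v > 0)"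

definition walk :: "'a set \<Rightarrow> ('a \<times> 'a) set \<Rightarrow> 'a list \<Rightarrow> bool" where
  "walk V E xs \<longleftrightarrow> xs \<noteq> [] \<and> set xs \<subseteq> V \<and> (\<forall>i < length xs - 1. (xs ! i, xs ! Suc i) \<in> E)"

definition walk_weight :: "('a \<Rightarrow> 'a \<Rightarrow> ereal) \<Rightarrow> 'a list \<Rightarrow> ereal" where
  "walk_weight w xs = (\<Sum>i < length xs - 1. w (xs ! i) (xs ! Suc i))"

definition gdist :: "'a set \<Rightarrow> ('a \<times> 'a) set \<Rightarrow> ('a \<Rightarrow> 'a \<Rightarrow> ereal) \<Rightarrow> 'a \<Rightarrow> 'a \<Rightarrow> ereal" where
  "gdist V E w s t = (INF xs \<in> {xs. walk V E xs \<and> hd xs = s \<and> last xs = t}. walk_weight w xs)"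

definition hop_dist :: "'a set \<Rightarrow> ('a \<times> 'a) set \<Rightarrow> ('a \<Rightarrow> 'a \<Rightarrow> ereal) \<Rightarrow> nat \<Rightarrow> 'a \<Rightarrow> 'a \<Rightarrow> ereal" where
  "hop_dist V E w h s t = (INF xs \<in> {xs. walk V E xs \<and> hd xs = s \<and> last xs = t \<and> length xs - 1 \<le> h}.
      walk_weight w xs)"

definition is_spanner :: "'a set \<Rightarrow> ('a \<times> 'a) set \<Rightarrow> ('a \<Rightarrow> 'a \<Rightarrow> ereal) \<Rightarrow> ('a \<times> 'a) set \<Rightarrow> ereal \<Rightarrow> bool" where
  "is_spanner V E w E' t \<longleftrightarrow> E' \<subseteq> E \<and> sym E' \<and>
     (\<forall>x\<in>V. \<forall>y\<in>V. gdist V E' w x y \<le> t * gdist V E w x y)"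

definition sample_set :: "'a set \<Rightarrow> real \<Rightarrow> 'a set pmf" where
  "sample_set V p = map_pmf (\<lambda>f. {v \<in> V. f v}) (Pi_pmf V False (\<lambda>_. bernoulli_pmf p))"

end

theory Submission
  imports Defs
begin

text \<open>
  For every pair (u, v) at finite distance fix a shortest path with the fewest edges. If it has
  more than h edges, call the h vertices following u its window. The sample misses a window with
  probability (1 - p)^h \<le> n^-(c+2), so by the union bound over the at most n^2 pairs it meets every
  window with probability at least 1 - n^-c.

  On that event, walk from s \<in> S towards v along the fixed path, jumping each time to a sampled
  vertex of the current window, until the rest of the path has at most h edges. Every jump follows
  at most h edges of a shortest path, so its estimate, and hence its H-distance, is within 1 + \<epsilon> of
  the true distance. The walk ends at some y \<in> S with d_H(s, y) + d~(y, v) \<le> (1 + \<epsilon>) d(s, v), and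
  d_H'(s, y) \<le> (2k - 1) d_H(s, y) gives the upper bound. The lower bound holds because every edge
  weight of H dominates the distance between its endpoints.
\<close>

section \<open>Walks and distances\<close>

lemma walk_weight_singleton [simp]: "walk_weight w [x] = 0"
  by (simp add: walk_weight_def)

lemma walk_weight_Cons_Cons [simp]:
  "walk_weight w (x # y # ys) = w x y + walk_weight w (y # ys)"
  unfolding walk_weight_def by (simp del: sum.lessThan_Suc add: sum.lessThan_Suc_shift)

lemma walk_singleton [simp]: "walk V E [x] \<longleftrightarrow> x \<in> V"
  by (simp add: walk_def)

lemma walk_Cons_Cons [simp]:
  "walk V E (x # y # ys) \<longleftrightarrow> x \<in> V \<and> (x, y) \<in> E \<and> walk V E (y # ys)"
  unfolding walk_def by (auto simp: less_Suc_eq_0_disj)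

lemma walk_nonempty: "walk V E xs \<Longrightarrow> xs \<noteq> []"
  by (simp add: walk_def)

lemma walk_Cons_imp_in: "walk V E (x # xs) \<Longrightarrow> x \<in> V"
  by (simp add: walk_def)

lemma walk_append_iff:
  "walk V E (xs @ y # ys) \<longleftrightarrow> walk V E (xs @ [y]) \<and> walk V E (y # ys)"
  by (induction xs rule: induct_list012) (auto dest: walk_Cons_imp_in)

lemma walk_weight_append:
  "walk_weight w (xs @ y # ys) = walk_weight w (xs @ [y]) + walk_weight w (y # ys)"
  by (induction xs rule: induct_list012) (auto simp: add.assoc)

lemma walk_rev:
  assumes "sym E" "walk V E xs"
  shows "walk V E (rev xs)"
  using assms(2)
proof (induction xs rule: induct_list012)
  case (3 x y zs)
  then have "walk V E (rev zs @ [y])" "(y, x) \<in> E" "x \<in> V"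
    using symD[OF assms(1)] by auto
  then show ?case
    using walk_append_iff[of V E "rev zs" y "[x]"] by (auto simp: walk_def)
qed auto

lemma walk_weight_rev:
  assumes "\<And>x y. (x, y) \<in> E \<Longrightarrow> w x y = w y x" "walk V E xs"
  shows "walk_weight w (rev xs) = walk_weight w xs"
  using assms(2)
proof (induction xs rule: induct_list012)
  case (3 x y zs)
  then show ?case
    using walk_weight_append[of w "rev zs" y "[x]"] assms(1)[of x y] by (simp add: add.commute)
qed auto

definition nonneg_weights :: "('a \<times> 'a) set \<Rightarrow> ('a \<Rightarrow> 'a \<Rightarrow> ereal) \<Rightarrow> bool" where
  "nonneg_weights E w \<longleftrightarrow> (\<forall>(x, y) \<in> E. 0 \<le> w x y)"

lemma walk_weight_nonneg:
  assumes "nonneg_weights E w" "walk V E xs"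
  shows "0 \<le> walk_weight w xs"
  using assms unfolding walk_weight_def walk_def nonneg_weights_def by (auto intro: sum_nonneg)

lemma walk_remove_cycle:
  assumes nn: "nonneg_weights E w" and "walk V E xs" "\<not> distinct xs"
  obtains ys where "walk V E ys" "hd ys = hd xs" "last ys = last xs"
    "walk_weight w ys \<le> walk_weight w xs" "length ys < length xs"
proof -
  obtain as bs cs x where xs: "xs = as @ x # bs @ x # cs"
    using not_distinct_decomp[OF assms(3)] by auto
  have walks: "walk V E (as @ [x])" "walk V E (x # bs @ [x])" "walk V E (x # cs)"
    using assms(2) walk_append_iff[of V E as x "bs @ x # cs"]
      walk_append_iff[of V E "x # bs" x cs] unfolding xs by auto
  have "walk_weight w (x # bs @ x # cs) = walk_weight w (x # bs @ [x]) + walk_weight w (x # cs)"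
    using walk_weight_append[of w "x # bs" x cs] by simp
  then have "walk_weight w xs =
      walk_weight w (as @ [x]) + (walk_weight w (x # bs @ [x]) + walk_weight w (x # cs))"
    unfolding xs walk_weight_append[of w as x "bs @ x # cs"] by simp
  moreover have "0 \<le> walk_weight w (x # bs @ [x])"
    by (rule walk_weight_nonneg[OF nn walks(2)])
  ultimately have "walk_weight w (as @ x # cs) \<le> walk_weight w xs"
    unfolding walk_weight_append[of w as x cs] by (simp add: add_increasing add_left_mono)
  moreover have "walk V E (as @ x # cs)"
    using walks(1,3) walk_append_iff[of V E as x cs] by blast
  ultimately show ?thesis
    by (intro that) (auto simp: xs hd_append)
qed

lemma walk_shortcut:
  assumes "nonneg_weights E w" "walk V E xs"
  obtains ys where "walk V E ys" "distinct ys" "hd ys = hd xs" "last ys = last xs"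
    "walk_weight w ys \<le> walk_weight w xs"
  using assms(2)
proof (induction xs arbitrary: thesis rule: measure_induct_rule[where f = length])
  case (less xs)
  show ?case
  proof (cases "distinct xs")
    case False
    then obtain ys where "walk V E ys" "hd ys = hd xs" "last ys = last xs"
      "walk_weight w ys \<le> walk_weight w xs" "length ys < length xs"
      using walk_remove_cycle[OF assms(1) less.prems(2)] by blast
    with less.IH[of ys] show ?thesis
      by (metis less.prems(1) order.trans)
  qed (use less.prems in blast)
qed

lemma finite_distinct_walks:
  assumes "finite V"
  shows "finite {xs. walk V E xs \<and> distinct xs \<and> P xs}"
proof (rule finite_subset)
  show "{xs. walk V E xs \<and> distinct xs \<and> P xs} \<subseteq> {xs. set xs \<subseteq> V \<and> length xs \<le> card V}"
    using assms by (auto simp: walk_def intro: card_mono dest!: distinct_card[symmetric])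
qed (rule finite_lists_length_le[OF assms])

lemma ereal_add_squeeze:
  fixes a b a' b' :: ereal
  assumes "a' \<le> a" "b' \<le> b" "a + b \<le> a' + b'" "a + b < \<infinity>" "0 \<le> a'" "0 \<le> b'"
  shows "a' = a \<and> b' = b"
  using assms by (cases a; cases b; cases a'; cases b') auto

lemma gdist_le_walk_weight:
  "walk V E xs \<Longrightarrow> hd xs = s \<Longrightarrow> last xs = t \<Longrightarrow> gdist V E w s t \<le> walk_weight w xs"
  unfolding gdist_def by (rule INF_lower) auto

lemma hop_dist_le_walk_weight:
  "walk V E xs \<Longrightarrow> hd xs = s \<Longrightarrow> last xs = t \<Longrightarrow> length xs \<le> Suc h \<Longrightarrow>
    hop_dist V E w h s t \<le> walk_weight w xs"
  unfolding hop_dist_def by (rule INF_lower) auto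

lemma hop_dist_antimono: "h \<le> h' \<Longrightarrow> hop_dist V E w h' s t \<le> hop_dist V E w h s t"
  unfolding hop_dist_def by (rule INF_superset_mono) auto

lemma gdist_nonneg: "nonneg_weights E w \<Longrightarrow> 0 \<le> gdist V E w s t"
  unfolding gdist_def by (rule INF_greatest) (auto intro: walk_weight_nonneg)

lemma gdist_less_top_imp_walk:
  assumes "gdist V E w s t < \<infinity>"
  obtains xs where "walk V E xs" "hd xs = s" "last xs = t"
proof (rule ccontr)
  assume "\<not> thesis"
  with that have "{xs. walk V E xs \<and> hd xs = s \<and> last xs = t} = {}"
    by blast
  with assms show False
    by (simp add: gdist_def top_ereal_def)
qed

lemma gdist_attained:
  assumes fin: "finite V" and nn: "nonneg_weights E w" and "gdist V E w s t < \<infinity>"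
  obtains P where "walk V E P" "hd P = s" "last P = t" "walk_weight w P = gdist V E w s t"
proof -
  define D where "D = {P. walk V E P \<and> distinct P \<and> hd P = s \<and> last P = t}"
  have fin_D: "finite D"
    using finite_distinct_walks[OF fin, of E "\<lambda>P. hd P = s \<and> last P = t"]
    unfolding D_def by simp
  have "D \<noteq> {}"
  proof -
    obtain xs where xs: "walk V E xs" "hd xs = s" "last xs = t"
      using gdist_less_top_imp_walk[OF assms(3)] .
    then show ?thesis
      using walk_shortcut[OF nn xs(1)] unfolding D_def by blast
  qed
  then obtain P where P: "P \<in> D" and P_le: "\<And>Q. Q \<in> D \<Longrightarrow> walk_weight w P \<le> walk_weight w Q"
    using arg_min_if_finite(1)[OF fin_D] arg_min_least[OF fin_D] by blast
  have "walk_weight w P \<le> gdist V E w s t"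
    unfolding gdist_def
  proof (rule INF_greatest)
    fix Q assume "Q \<in> {xs. walk V E xs \<and> hd xs = s \<and> last xs = t}"
    then have Q: "walk V E Q" "hd Q = s" "last Q = t"
      by auto
    then obtain R where "R \<in> D" "walk_weight w R \<le> walk_weight w Q"
      using walk_shortcut[OF nn Q(1)] unfolding D_def by auto
    then show "walk_weight w P \<le> walk_weight w Q"
      using P_le order.trans by blast
  qed
  with P show ?thesis
    by (intro that) (auto simp: D_def intro: order.antisym gdist_le_walk_weight)
qed

lemma gdist_triangle:
  assumes fin: "finite V" and nn: "nonneg_weights E w"
  shows "gdist V E w s u \<le> gdist V E w s t + gdist V E w t u"
proof (cases "gdist V E w s t < \<infinity> \<and> gdist V E w t u < \<infinity>")
  case True
  then obtain P Q where P: "walk V E P" "hd P = s" "last P = t" "walk_weight w P = gdist V E w s t"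
    and Q: "walk V E Q" "hd Q = t" "last Q = u" "walk_weight w Q = gdist V E w t u"
    using gdist_attained[OF fin nn] by metis
  define xs where "xs = butlast P"
  define ys where "ys = tl Q"
  have "P = xs @ [t]" "Q = t # ys"
    using P Q walk_nonempty unfolding xs_def ys_def by (metis append_butlast_last_id list.collapse)+
  then have "walk V E (xs @ t # ys)" "hd (xs @ t # ys) = s" "last (xs @ t # ys) = u"
    and "walk_weight w (xs @ t # ys) = gdist V E w s t + gdist V E w t u"
    using P Q walk_append_iff[of V E xs t ys] walk_weight_append[of w xs t ys]
    by (auto simp: hd_append)
  then show ?thesis
    by (metis gdist_le_walk_weight)
next
  case False
  then have "gdist V E w s t + gdist V E w t u = \<infinity>"
    using gdist_nonneg[OF nn, of V s t] gdist_nonneg[OF nn, of V t u]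
    by (cases "gdist V E w s t"; cases "gdist V E w t u") auto
  then show ?thesis
    by (metis ereal_less_eq(1))
qed

lemma gdist_edge: "(x, y) \<in> E \<Longrightarrow> x \<in> V \<Longrightarrow> y \<in> V \<Longrightarrow> gdist V E w x y \<le> w x y"
  using gdist_le_walk_weight[of V E "[x, y]" x y w] by simp

lemma gdist_self_le_0: "x \<in> V \<Longrightarrow> gdist V E w x x \<le> 0"
  using gdist_le_walk_weight[of V E "[x]" x x w] by simp

lemma gdist_sym:
  assumes "sym E" "\<And>x y. (x, y) \<in> E \<Longrightarrow> w x y = w y x"
  shows "gdist V E w s t = gdist V E w t s"
proof -
  have "gdist V E w s t \<le> gdist V E w t s" for s t
    unfolding gdist_def[of V E w t s]
  proof (rule INF_greatest)
    fix xs assume "xs \<in> {xs. walk V E xs \<and> hd xs = t \<and> last xs = s}"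
    then have xs: "walk V E xs" "hd xs = t" "last xs = s"
      by auto
    then show "gdist V E w s t \<le> walk_weight w xs"
      using gdist_le_walk_weight[of V E "rev xs" s t w] walk_rev[OF assms(1) xs(1)]
        walk_weight_rev[OF assms(2) xs(1)] walk_nonempty[OF xs(1)]
      by (simp add: hd_rev last_rev)
  qed
  from this[of s t] this[of t s] show ?thesis
    by (rule order.antisym)
qed

lemma gdist_le_gdist_if_edges_dominate:
  assumes fin: "finite V" and nn: "nonneg_weights E w" and "V' \<subseteq> V"
    and dominate: "\<And>x y. (x, y) \<in> E' \<Longrightarrow> gdist V E w x y \<le> w' x y"
  shows "gdist V E w s t \<le> gdist V' E' w' s t"
proof -
  have "gdist V E w (hd xs) (last xs) \<le> walk_weight w' xs" if "walk V' E' xs" for xs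
    using that
  proof (induction xs rule: induct_list012)
    case (2 x)
    then show ?case
      using \<open>V' \<subseteq> V\<close> gdist_self_le_0[of x V E w] by auto
  next
    case (3 x y zs)
    then have "gdist V E w x y \<le> w' x y"
      and "gdist V E w y (last (y # zs)) \<le> walk_weight w' (y # zs)"
      using dominate by auto
    then have "gdist V E w x y + gdist V E w y (last (y # zs)) \<le> walk_weight w' (x # y # zs)"
      by (simp add: add_mono)
    then show ?case
      using gdist_triangle[OF fin nn, of x "last (y # zs)" y] by simp
  qed (simp add: walk_def)
  then show ?thesis
    unfolding gdist_def[of V' E' w'] by (intro INF_greatest) fastforce
qed

section \<open>Canonical shortest paths and their windows\<close>

definition shortest_walk ::
    "'a set \<Rightarrow> ('a \<times> 'a) set \<Rightarrow> ('a \<Rightarrow> 'a \<Rightarrow> ereal) \<Rightarrow> 'a \<Rightarrow> 'a \<Rightarrow> 'a list \<Rightarrow> bool" where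
  "shortest_walk V E w s t P \<longleftrightarrow>
     walk V E P \<and> hd P = s \<and> last P = t \<and> walk_weight w P = gdist V E w s t"

text \<open>Junk value: an arbitrary list when t is unreachable from s.\<close>

definition canonical_path ::
    "'a set \<Rightarrow> ('a \<times> 'a) set \<Rightarrow> ('a \<Rightarrow> 'a \<Rightarrow> ereal) \<Rightarrow> 'a \<Rightarrow> 'a \<Rightarrow> 'a list" where
  "canonical_path V E w s t = arg_min length (shortest_walk V E w s t)"

definition window ::
    "'a set \<Rightarrow> ('a \<times> 'a) set \<Rightarrow> ('a \<Rightarrow> 'a \<Rightarrow> ereal) \<Rightarrow> nat \<Rightarrow> 'a \<Rightarrow> 'a \<Rightarrow> 'a set" where
  "window V E w h u v = set (take h (tl (canonical_path V E w u v)))"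

definition long_pairs ::
    "'a set \<Rightarrow> ('a \<times> 'a) set \<Rightarrow> ('a \<Rightarrow> 'a \<Rightarrow> ereal) \<Rightarrow> nat \<Rightarrow> ('a \<times> 'a) set" where
  "long_pairs V E w h =
     {(u, v) \<in> V \<times> V. gdist V E w u v < \<infinity> \<and> Suc h < length (canonical_path V E w u v)}"

locale nonneg_weighted_graph =
  fixes V :: "'a set" and E :: "('a \<times> 'a) set" and w :: "'a \<Rightarrow> 'a \<Rightarrow> ereal"
  assumes finite_V: "finite V" and nonneg: "nonneg_weights E w"
begin

lemma shortest_walk_canonical_path:
  assumes "gdist V E w s t < \<infinity>"
  shows "shortest_walk V E w s t (canonical_path V E w s t)"
  using gdist_attained[OF finite_V nonneg assms] unfolding canonical_path_def
  by (metis arg_min_natI shortest_walk_def)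

lemma length_canonical_path_le:
  "shortest_walk V E w s t P \<Longrightarrow> length (canonical_path V E w s t) \<le> length P"
  unfolding canonical_path_def by (rule arg_min_nat_le)

lemma distinct_canonical_path:
  assumes "gdist V E w s t < \<infinity>"
  shows "distinct (canonical_path V E w s t)"
proof (rule ccontr)
  let ?P = "canonical_path V E w s t"
  assume "\<not> distinct ?P"
  moreover have P: "shortest_walk V E w s t ?P"
    by (rule shortest_walk_canonical_path[OF assms])
  ultimately obtain Q where "walk V E Q" "hd Q = s" "last Q = t"
    "walk_weight w Q \<le> walk_weight w ?P" and shorter: "length Q < length ?P"
    using walk_remove_cycle[OF nonneg] unfolding shortest_walk_def by metis
  then have "shortest_walk V E w s t Q"
    using P gdist_le_walk_weight[of V E Q s t w] unfolding shortest_walk_def by auto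
  with shorter show False
    using length_canonical_path_le by (simp add: not_le[symmetric])
qed

lemma shortest_walk_split:
  assumes "shortest_walk V E w s t (xs @ z # ys)" "gdist V E w s t < \<infinity>"
  shows "shortest_walk V E w s z (xs @ [z])" "shortest_walk V E w z t (z # ys)"
    and "gdist V E w s z + gdist V E w z t = gdist V E w s t"
proof -
  have walks: "walk V E (xs @ [z])" "walk V E (z # ys)"
    and ends: "hd (xs @ [z]) = s" "last (z # ys) = t"
    and sum: "walk_weight w (xs @ [z]) + walk_weight w (z # ys) = gdist V E w s t"
    using assms(1) walk_append_iff[of V E xs z ys] walk_weight_append[of w xs z ys]
    unfolding shortest_walk_def by (auto simp: hd_append split: if_splits)
  have le: "gdist V E w s z \<le> walk_weight w (xs @ [z])" "gdist V E w z t \<le> walk_weight w (z # ys)"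
    using walks ends by (auto intro: gdist_le_walk_weight)
  moreover have "gdist V E w s t \<le> gdist V E w s z + gdist V E w z t"
    by (rule gdist_triangle[OF finite_V nonneg])
  ultimately have "gdist V E w s z = walk_weight w (xs @ [z]) \<and> gdist V E w z t = walk_weight w (z # ys)"
    using sum assms(2) gdist_nonneg[OF nonneg]
    by (metis ereal_add_squeeze)
  then show "shortest_walk V E w s z (xs @ [z])" "shortest_walk V E w z t (z # ys)"
    and "gdist V E w s z + gdist V E w z t = gdist V E w s t"
    using walks ends sum unfolding shortest_walk_def by auto
qed

lemma hop_dist_le_gdist_if_not_long:
  assumes "u \<in> V" "v \<in> V" "(u, v) \<notin> long_pairs V E w h"
  shows "hop_dist V E w h u v \<le> gdist V E w u v"
proof (cases "gdist V E w u v < \<infinity>")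
  case True
  then have "shortest_walk V E w u v (canonical_path V E w u v)"
    and "length (canonical_path V E w u v) \<le> Suc h"
    using assms shortest_walk_canonical_path unfolding long_pairs_def by auto
  then show ?thesis
    unfolding shortest_walk_def by (metis hop_dist_le_walk_weight)
next
  case False
  then show ?thesis
    by (simp add: not_less)
qed

lemma window_subset:
  assumes "(u, v) \<in> long_pairs V E w h"
  shows "window V E w h u v \<subseteq> V"
proof -
  have "walk V E (canonical_path V E w u v)"
    using assms shortest_walk_canonical_path unfolding long_pairs_def shortest_walk_def by auto
  then show ?thesis
    unfolding window_def walk_def by (meson in_set_takeD list.set_sel(2) order.trans subsetI)
qed

lemma card_window:
  assumes "(u, v) \<in> long_pairs V E w h"
  shows "card (window V E w h u v) = h"
proof -
  have "distinct (canonical_path V E w u v)" and "Suc h < length (canonical_path V E w u v)"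
    using assms distinct_canonical_path unfolding long_pairs_def by auto
  then show ?thesis
    unfolding window_def by (simp add: distinct_card distinct_tl)
qed

lemma window_vertex:
  assumes long: "(u, v) \<in> long_pairs V E w h" and z: "z \<in> window V E w h u v"
  shows "z \<noteq> u" and "hop_dist V E w h u z \<le> gdist V E w u z"
    and "gdist V E w u z + gdist V E w z v = gdist V E w u v"
    and "length (canonical_path V E w z v) < length (canonical_path V E w u v)"
proof -
  let ?P = "canonical_path V E w u v"
  have finite_uv: "gdist V E w u v < \<infinity>" and "Suc h < length ?P"
    using long unfolding long_pairs_def by auto
  have P: "shortest_walk V E w u v ?P" "distinct ?P"
    using shortest_walk_canonical_path[OF finite_uv] distinct_canonical_path[OF finite_uv] .
  obtain j where "j < h" "z = tl ?P ! j"
    using z \<open>Suc h < length ?P\<close> unfolding window_def by (auto simp: in_set_conv_nth)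
  then obtain i where i: "0 < i" "i \<le> h" "z = ?P ! i" "i < length ?P"
    using \<open>Suc h < length ?P\<close> by (intro that[of "Suc j"]) (auto simp: nth_tl)
  have split: "?P = take i ?P @ z # drop (Suc i) ?P"
    using id_take_nth_drop[OF i(4)] i(3) by simp
  note halves = shortest_walk_split[of u v "take i ?P" z "drop (Suc i) ?P",
      folded split, OF P(1) finite_uv]
  show "z \<noteq> u"
    using P i nth_eq_iff_index_eq[of ?P 0 i] unfolding shortest_walk_def
    by (metis hd_conv_nth less_irrefl walk_nonempty less_trans)
  show "hop_dist V E w h u z \<le> gdist V E w u z"
    using halves(1) i(1,2,4) unfolding shortest_walk_def
    by (intro hop_dist_le_walk_weight[THEN order.trans]) (auto simp: min_def)
  show "gdist V E w u z + gdist V E w z v = gdist V E w u v"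
    by (rule halves(3))
  have "length (canonical_path V E w z v) \<le> length (z # drop (Suc i) ?P)"
    by (rule length_canonical_path_le[OF halves(2)])
  then show "length (canonical_path V E w z v) < length ?P"
    using i by simp
qed

end

section \<open>The stretch bound on a sample meeting every window\<close>

abbreviation estimate_graph_edges :: "'a set \<Rightarrow> ('a \<Rightarrow> 'a \<Rightarrow> ereal) \<Rightarrow> ('a \<times> 'a) set" where
  "estimate_graph_edges S dt \<equiv> {(s, s'). s \<in> S \<and> s' \<in> S \<and> s \<noteq> s' \<and> min (dt s s') (dt s' s) < \<infinity>}"

abbreviation estimate_graph_weight :: "('a \<Rightarrow> 'a \<Rightarrow> ereal) \<Rightarrow> 'a \<Rightarrow> 'a \<Rightarrow> ereal" where
  "estimate_graph_weight dt \<equiv> \<lambda>s s'. min (dt s s') (dt s' s)"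

definition hits_windows ::
    "'a set \<Rightarrow> ('a \<times> 'a) set \<Rightarrow> ('a \<Rightarrow> 'a \<Rightarrow> ereal) \<Rightarrow> nat \<Rightarrow> 'a set \<Rightarrow> bool" where
  "hits_windows V E w h S \<longleftrightarrow>
     S \<subseteq> V \<and> (\<forall>(u, v) \<in> long_pairs V E w h. window V E w h u v \<inter> S \<noteq> {})"

lemma nonneg_weights_estimate_graph:
  "(\<And>s s'. s \<in> S \<Longrightarrow> s' \<in> S \<Longrightarrow> 0 \<le> dt s s') \<Longrightarrow>
    nonneg_weights (estimate_graph_edges S dt) (estimate_graph_weight dt)"
  unfolding nonneg_weights_def by auto

context nonneg_weighted_graph
begin

lemma estimate_graph_dist_to_window_le:
  fixes e :: real
  assumes SV: "S \<subseteq> V"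
    and dt_upper: "\<And>s v. s \<in> S \<Longrightarrow> v \<in> V \<Longrightarrow> dt s v \<le> ereal e * hop_dist V E w h s v"
    and e: "0 \<le> e" and u: "u \<in> S" and long: "(u, v) \<in> long_pairs V E w h"
    and z: "z \<in> window V E w h u v" "z \<in> S"
  shows "gdist S (estimate_graph_edges S dt) (estimate_graph_weight dt) u z \<le> ereal e * gdist V E w u z"
proof -
  note z_on_path = window_vertex[OF long z(1)]
  have "dt u z \<le> ereal e * hop_dist V E w h u z"
    using dt_upper u z(2) SV by auto
  also have "\<dots> \<le> ereal e * gdist V E w u z"
    using z_on_path(2) e by (intro ereal_mult_left_mono) auto
  finally have weight: "min (dt u z) (dt z u) \<le> ereal e * gdist V E w u z"
    by (rule min.coboundedI1)
  have "gdist V E w u v < \<infinity>"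
    using long unfolding long_pairs_def by auto
  then have "gdist V E w u z < \<infinity>"
    using z_on_path(3) gdist_nonneg[OF nonneg, of V u z] gdist_nonneg[OF nonneg, of V z v]
    by (cases "gdist V E w u z"; cases "gdist V E w z v") auto
  then have "ereal e * gdist V E w u z < \<infinity>"
    using gdist_nonneg[OF nonneg, of V u z] by (cases "gdist V E w u z") auto
  with weight have "min (dt u z) (dt z u) < \<infinity>"
    by (rule le_less_trans)
  then have "(u, z) \<in> estimate_graph_edges S dt"
    using u z(2) z_on_path(1) by simp
  then have "gdist S (estimate_graph_edges S dt) (estimate_graph_weight dt) u z \<le> min (dt u z) (dt z u)"
    by (rule gdist_edge[OF _ u z(2)])
  then show ?thesis
    using weight by (rule order.trans)
qed

text \<open>
  a and b stand for d(u, y) and d(y, v); only their sum is controlled, which spares proving that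
  y lies on a shortest path from u to v.
\<close>

lemma sampled_hub_on_shortest_path:
  fixes S :: "'a set" and dt :: "'a \<Rightarrow> 'a \<Rightarrow> ereal" and e :: real
  assumes SV: "S \<subseteq> V"
    and hits: "\<And>u v. (u, v) \<in> long_pairs V E w h \<Longrightarrow> window V E w h u v \<inter> S \<noteq> {}"
    and dt_nonneg: "\<And>s v. s \<in> S \<Longrightarrow> v \<in> V \<Longrightarrow> 0 \<le> dt s v"
    and dt_upper: "\<And>s v. s \<in> S \<Longrightarrow> v \<in> V \<Longrightarrow> dt s v \<le> ereal e * hop_dist V E w h s v"
    and e: "0 \<le> e" and u: "u \<in> S" and v: "v \<in> V"
  shows "\<exists>y\<in>S. \<exists>a b. 0 \<le> a \<and> 0 \<le> b \<and> a + b \<le> gdist V E w u v \<and>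
           gdist S (estimate_graph_edges S dt) (estimate_graph_weight dt) u y \<le> ereal e * a \<and>
           dt y v \<le> ereal e * b"
  using u
proof (induction u rule: measure_induct_rule[where f = "\<lambda>u. length (canonical_path V E w u v)"])
  case (less u)
  let ?dH = "gdist S (estimate_graph_edges S dt) (estimate_graph_weight dt)"
  have uV: "u \<in> V"
    using less.prems SV by auto
  have d_nonneg: "0 \<le> gdist V E w x y" for x y
    by (rule gdist_nonneg[OF nonneg])
  show ?case
  proof (cases "(u, v) \<in> long_pairs V E w h")
    case False
    have "dt u v \<le> ereal e * hop_dist V E w h u v"
      by (rule dt_upper[OF less.prems v])
    also have "\<dots> \<le> ereal e * gdist V E w u v"
      using hop_dist_le_gdist_if_not_long[OF uV v False] e by (intro ereal_mult_left_mono) auto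
    finally have "dt u v \<le> ereal e * gdist V E w u v" .
    moreover have "?dH u u \<le> ereal e * 0"
      using gdist_self_le_0[OF less.prems] by simp
    moreover have "0 + gdist V E w u v \<le> gdist V E w u v"
      by simp
    ultimately show ?thesis
      using less.prems d_nonneg[of u v] by blast
  next
    case True
    then obtain z where z: "z \<in> window V E w h u v" "z \<in> S"
      using hits by blast
    note z_on_path = window_vertex[OF True z(1)]
    obtain y a b where y: "y \<in> S" "0 \<le> a" "0 \<le> b" "a + b \<le> gdist V E w z v"
      and a: "?dH z y \<le> ereal e * a" and b: "dt y v \<le> ereal e * b"
      using less.IH[OF z_on_path(4) z(2)] by blast
    have "nonneg_weights (estimate_graph_edges S dt) (estimate_graph_weight dt)"
      using dt_nonneg SV by (intro nonneg_weights_estimate_graph) auto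
    then have "?dH u y \<le> ?dH u z + ?dH z y"
      by (rule gdist_triangle[OF finite_subset[OF SV finite_V]])
    also have "\<dots> \<le> ereal e * gdist V E w u z + ereal e * a"
      by (intro add_mono estimate_graph_dist_to_window_le[OF SV dt_upper e less.prems True z] a)
    also have "\<dots> = ereal e * (gdist V E w u z + a)"
      by (simp add: ereal_right_distrib d_nonneg y(2))
    finally have "?dH u y \<le> ereal e * (gdist V E w u z + a)" .
    moreover have "gdist V E w u z + a + b \<le> gdist V E w u v"
      using add_left_mono[OF y(4), of "gdist V E w u z"] z_on_path(3) by (simp add: add.assoc)
    moreover have "0 \<le> gdist V E w u z + a"
      using d_nonneg[of u z] y(2) by simp
    ultimately show ?thesis
      using y(1,3) b by blast
  qed
qed

lemma estimate_distance_lower: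
  assumes "sym E" and w_sym: "\<And>x y. (x, y) \<in> E \<Longrightarrow> w x y = w y x" and SV: "S \<subseteq> V"
    and dt_lower: "\<And>s v. s \<in> S \<Longrightarrow> v \<in> V \<Longrightarrow> gdist V E w s v \<le> dt s v"
    and E': "E' \<subseteq> estimate_graph_edges S dt" and v: "v \<in> V"
  shows "gdist V E w s v \<le> (INF s'\<in>S. gdist S E' (estimate_graph_weight dt) s s' + dt s' v)"
proof (rule INF_greatest)
  fix s' assume s': "s' \<in> S"
  have "gdist V E w s s' \<le> gdist S E' (estimate_graph_weight dt) s s'"
  proof (rule gdist_le_gdist_if_edges_dominate[OF finite_V nonneg SV])
    fix x y assume "(x, y) \<in> E'"
    then have "gdist V E w x y \<le> dt x y" "gdist V E w y x \<le> dt y x"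
      using E' SV dt_lower by auto
    then show "gdist V E w x y \<le> min (dt x y) (dt y x)"
      using gdist_sym[OF \<open>sym E\<close> w_sym, where V = V and s = x and t = y] by simp
  qed
  then have "gdist V E w s s' + gdist V E w s' v \<le> gdist S E' (estimate_graph_weight dt) s s' + dt s' v"
    using dt_lower[OF s' v] by (rule add_mono)
  with gdist_triangle[OF finite_V nonneg] show "gdist V E w s v \<le> gdist S E' (estimate_graph_weight dt) s s' + dt s' v"
    by (rule order.trans)
qed

lemma estimate_distance_upper:
  fixes t e :: real
  assumes SV: "S \<subseteq> V"
    and hits: "\<And>u v. (u, v) \<in> long_pairs V E w h \<Longrightarrow> window V E w h u v \<inter> S \<noteq> {}"
    and dt_nonneg: "\<And>s v. s \<in> S \<Longrightarrow> v \<in> V \<Longrightarrow> 0 \<le> dt s v"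
    and dt_upper: "\<And>s v. s \<in> S \<Longrightarrow> v \<in> V \<Longrightarrow> dt s v \<le> ereal e * hop_dist V E w h' s v"
    and "h \<le> h'"
    and spanner: "\<And>x y. x \<in> S \<Longrightarrow> y \<in> S \<Longrightarrow> gdist S E' (estimate_graph_weight dt) x y
                    \<le> ereal t * gdist S (estimate_graph_edges S dt) (estimate_graph_weight dt) x y"
    and t: "1 \<le> t" and e: "0 < e" and s: "s \<in> S" and v: "v \<in> V"
  shows "(INF s'\<in>S. gdist S E' (estimate_graph_weight dt) s s' + dt s' v) \<le> ereal (t * e) * gdist V E w s v"
proof -
  have dt_upper_h: "dt x y \<le> ereal e * hop_dist V E w h x y" if "x \<in> S" "y \<in> V" for x y
  proof -
    have "ereal e * hop_dist V E w h' x y \<le> ereal e * hop_dist V E w h x y"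
      using hop_dist_antimono[OF \<open>h \<le> h'\<close>] e by (intro ereal_mult_left_mono) auto
    with dt_upper[OF that] show ?thesis
      by (rule order.trans)
  qed
  obtain y a b where y: "y \<in> S" and ab: "0 \<le> a" "0 \<le> b" "a + b \<le> gdist V E w s v"
    and a: "gdist S (estimate_graph_edges S dt) (estimate_graph_weight dt) s y \<le> ereal e * a"
    and b: "dt y v \<le> ereal e * b"
    using sampled_hub_on_shortest_path[OF SV hits dt_nonneg dt_upper_h less_imp_le[OF e] s v] by blast
  have "(INF s'\<in>S. gdist S E' (estimate_graph_weight dt) s s' + dt s' v)
      \<le> gdist S E' (estimate_graph_weight dt) s y + dt y v"
    by (rule INF_lower[OF y])
  also have "\<dots> \<le> ereal t * (ereal e * a) + ereal e * b"
    using t by (intro add_mono order.trans[OF spanner[OF s y]] ereal_mult_left_mono a b) auto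
  also have "\<dots> \<le> ereal (t * e) * (a + b)"
  proof -
    have "r * e \<le> r * (e * t)" if "0 \<le> r" for r
      using t e that by (simp add: mult_left_mono)
    then show ?thesis
      using ab(1,2) t e by (cases a; cases b) (auto simp: algebra_simps intro!: mult_right_mono)
  qed
  also have "\<dots> \<le> ereal (t * e) * gdist V E w s v"
    using ab(3) t e by (intro ereal_mult_left_mono) auto
  finally show ?thesis .
qed

lemma estimate_spanner_stretch:
  fixes t e :: real
  assumes "sym E" and w_sym: "\<And>x y. (x, y) \<in> E \<Longrightarrow> w x y = w y x"
    and hits: "hits_windows V E w h S" and "h \<le> h'" and t: "1 \<le> t" and e: "0 < e"
  shows "\<forall>dt E'. (\<forall>s\<in>S. \<forall>v\<in>V. gdist V E w s v \<le> dt s v \<and> dt s v \<le> ereal e * hop_dist V E w h' s v) \<longrightarrow>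
           is_spanner S (estimate_graph_edges S dt) (estimate_graph_weight dt) E' (ereal t) \<longrightarrow>
           (\<forall>s\<in>S. \<forall>v\<in>V.
              gdist V E w s v \<le> (INF s'\<in>S. gdist S E' (estimate_graph_weight dt) s s' + dt s' v) \<and>
              (INF s'\<in>S. gdist S E' (estimate_graph_weight dt) s s' + dt s' v)
                \<le> ereal (t * e) * gdist V E w s v)"
proof (intro allI impI ballI conjI)
  fix dt E' s v
  assume est: "\<forall>s\<in>S. \<forall>v\<in>V. gdist V E w s v \<le> dt s v \<and> dt s v \<le> ereal e * hop_dist V E w h' s v"
    and spanner: "is_spanner S (estimate_graph_edges S dt) (estimate_graph_weight dt) E' (ereal t)"
    and s: "s \<in> S" and v: "v \<in> V"
  have SV: "S \<subseteq> V"
    using hits unfolding hits_windows_def by blast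
  have dt_lower: "\<And>s v. s \<in> S \<Longrightarrow> v \<in> V \<Longrightarrow> gdist V E w s v \<le> dt s v"
    using est by blast
  show "gdist V E w s v \<le> (INF s'\<in>S. gdist S E' (estimate_graph_weight dt) s s' + dt s' v)"
    using estimate_distance_lower[OF \<open>sym E\<close> w_sym SV dt_lower _ v] spanner
    unfolding is_spanner_def by blast
  show "(INF s'\<in>S. gdist S E' (estimate_graph_weight dt) s s' + dt s' v) \<le> ereal (t * e) * gdist V E w s v"
  proof (rule estimate_distance_upper[OF SV _ _ _ \<open>h \<le> h'\<close> _ t e s v])
    show "window V E w h u v \<inter> S \<noteq> {}" if "(u, v) \<in> long_pairs V E w h" for u v
      using hits that unfolding hits_windows_def by blast
    show "0 \<le> dt s v" if "s \<in> S" "v \<in> V" for s v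
      using dt_lower[OF that] gdist_nonneg[OF nonneg] order.trans by blast
  qed (use est spanner s in \<open>auto simp: is_spanner_def\<close>)
qed

end

section \<open>Sampling\<close>

lemma prob_Pi_bernoulli_all_False:
  assumes "finite V" "A \<subseteq> V" "0 \<le> p" "p \<le> 1"
  shows "measure_pmf.prob (Pi_pmf V False (\<lambda>_. bernoulli_pmf p)) {f. \<forall>x\<in>A. \<not> f x} = (1 - p) ^ card A"
proof -
  have "{f. \<forall>x\<in>A. \<not> f x} = Pi V (\<lambda>x. if x \<in> A then {False} else UNIV)"
    using assms(2) by (auto simp: Pi_def)
  then have "measure_pmf.prob (Pi_pmf V False (\<lambda>_. bernoulli_pmf p)) {f. \<forall>x\<in>A. \<not> f x}
      = (\<Prod>x\<in>V. measure_pmf.prob (bernoulli_pmf p) (if x \<in> A then {False} else UNIV))"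
    by (simp add: measure_Pi_pmf_Pi[OF assms(1)])
  also have "\<dots> = (\<Prod>x\<in>V. if x \<in> A then 1 - p else 1)"
    by (intro prod.cong refl) (auto simp: measure_pmf_single assms(3,4))
  also have "\<dots> = (1 - p) ^ card A"
    using assms(1,2) by (simp add: prod.If_cases Int_absorb1 Int_absorb2)
  finally show ?thesis .
qed

lemma sample_set_hits_all:
  fixes A :: "'i \<Rightarrow> 'a set"
  assumes fin: "finite V" and "finite I" and A_sub: "\<And>i. i \<in> I \<Longrightarrow> A i \<subseteq> V"
    and A_card: "\<And>i. i \<in> I \<Longrightarrow> card (A i) = m" and p: "0 \<le> p" "p \<le> 1"
  shows "1 - real (card I) * (1 - p) ^ m
           \<le> measure_pmf.prob (sample_set V p) {S. S \<subseteq> V \<and> (\<forall>i\<in>I. A i \<inter> S \<noteq> {})}"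
proof -
  let ?M = "Pi_pmf V False (\<lambda>_. bernoulli_pmf p)"
  define miss where "miss i = {f. \<forall>x\<in>A i. \<not> f x}" for i
  have "A i \<inter> {v \<in> V. f v} \<noteq> {} \<longleftrightarrow> f \<notin> miss i" if "i \<in> I" for i f
    using A_sub[OF that] unfolding miss_def by auto
  then have "(\<lambda>f. {v \<in> V. f v}) -` {S. S \<subseteq> V \<and> (\<forall>i\<in>I. A i \<inter> S \<noteq> {})} = UNIV - (\<Union>i\<in>I. miss i)"
    by auto
  then have "measure_pmf.prob (sample_set V p) {S. S \<subseteq> V \<and> (\<forall>i\<in>I. A i \<inter> S \<noteq> {})}
      = 1 - measure_pmf.prob ?M (\<Union>i\<in>I. miss i)"
    using measure_pmf.prob_compl[of "\<Union>i\<in>I. miss i" ?M] unfolding sample_set_def by simp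
  moreover have "measure_pmf.prob ?M (\<Union>i\<in>I. miss i) \<le> (\<Sum>i\<in>I. measure_pmf.prob ?M (miss i))"
    by (rule measure_pmf.finite_measure_subadditive_finite) (use \<open>finite I\<close> in auto)
  moreover have "(\<Sum>i\<in>I. measure_pmf.prob ?M (miss i)) = real (card I) * (1 - p) ^ m"
    using prob_Pi_bernoulli_all_False[OF fin A_sub p] A_card unfolding miss_def by simp
  ultimately show ?thesis
    by linarith
qed

lemma sampling_failure_le_powr:
  fixes n h :: nat and c :: real
  assumes h: "1 \<le> h" and c: "-2 \<le> c"
  shows "real n ^ 2 * (1 - min ((c + 2) * log 2 (real n) / real h) 1) ^ h \<le> real n powr - c"
proof (cases "n = 0")
  case False
  define L where "L = log 2 (real n)"
  define p where "p = min ((c + 2) * L / real h) 1"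
  have ln_n: "0 \<le> ln (real n)"
    using False by simp
  have "ln (real n) \<le> L"
    unfolding L_def log_def using ln_n ln_2_less_1 by (simp add: le_divide_eq mult_left_le)
  have "(1 - p) ^ h \<le> real n powr - (c + 2)"
  proof (cases "(c + 2) * L / real h < 1")
    case True
    then have p: "p = (c + 2) * L / real h" "0 \<le> p" "p < 1"
      unfolding p_def using c h ln_n \<open>ln (real n) \<le> L\<close> by auto
    have "(1 - p) ^ h \<le> exp (- p) ^ h"
      using p exp_ge_add_one_self[of "- p"] by (intro power_mono) auto
    also have "\<dots> = exp (- ((c + 2) * L))"
      using h by (simp add: p(1) flip: exp_of_nat_mult)
    also have "\<dots> \<le> exp (- ((c + 2) * ln (real n)))"
      using c \<open>ln (real n) \<le> L\<close> by (simp add: mult_left_mono)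
    also have "\<dots> = real n powr - (c + 2)"
      using False by (simp add: powr_def algebra_simps)
    finally show ?thesis .
  next
    case False
    then have "p = 1"
      unfolding p_def by simp
    then show ?thesis
      using h by (simp add: power_0_left)
  qed
  then have "real n ^ 2 * (1 - p) ^ h \<le> real n powr 2 * real n powr - (c + 2)"
    using False by (simp add: mult_left_mono)
  also have "\<dots> = real n powr - c"
    by (simp only: powr_add[symmetric]) simp
  finally show ?thesis
    unfolding p_def L_def .
qed simp

lemma long_pairs_subset: "long_pairs V E w h \<subseteq> V \<times> V"
  unfolding long_pairs_def by auto

context nonneg_weighted_graph
begin

lemma finite_long_pairs: "finite (long_pairs V E w h)"
  by (rule finite_subset[OF long_pairs_subset]) (simp add: finite_V)

lemma card_long_pairs_le: "card (long_pairs V E w h) \<le> card V ^ 2"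
  using card_mono[OF _ long_pairs_subset[of V E w h]] finite_V by (simp add: card_cartesian_product power2_eq_square)

lemma prob_hits_windows:
  assumes h: "1 \<le> h" and c: "-2 \<le> c"
  shows "1 - real (card V) powr - c \<le> measure_pmf.prob
           (sample_set V (min ((c + 2) * log 2 (real (card V)) / real h) 1)) (Collect (hits_windows V E w h))"
proof -
  define p where "p = min ((c + 2) * log 2 (real (card V)) / real h) 1"
  have "0 \<le> log 2 (real (card V))"
    by (cases "card V = 0") (auto simp: log_def)
  then have p: "0 \<le> p" "p \<le> 1"
    using c h unfolding p_def by auto
  have "1 - real (card (long_pairs V E w h)) * (1 - p) ^ h \<le> measure_pmf.prob (sample_set V p)
      {S. S \<subseteq> V \<and> (\<forall>i\<in>long_pairs V E w h. window V E w h (fst i) (snd i) \<inter> S \<noteq> {})}"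
    using window_subset card_window by (intro sample_set_hits_all[OF finite_V finite_long_pairs _ _ p]) auto
  also have "{S. S \<subseteq> V \<and> (\<forall>i\<in>long_pairs V E w h. window V E w h (fst i) (snd i) \<inter> S \<noteq> {})}
      = Collect (hits_windows V E w h)"
    unfolding hits_windows_def by (auto simp: case_prod_beta)
  finally have "1 - real (card (long_pairs V E w h)) * (1 - p) ^ h
      \<le> measure_pmf.prob (sample_set V p) (Collect (hits_windows V E w h))" .
  moreover have "real (card (long_pairs V E w h)) * (1 - p) ^ h \<le> real (card V) ^ 2 * (1 - p) ^ h"
    using card_long_pairs_le p by (intro mult_right_mono) (auto simp flip: of_nat_power)
  moreover have "real (card V) ^ 2 * (1 - p) ^ h \<le> real (card V) powr - c"
    unfolding p_def by (rule sampling_failure_le_powr[OF h c])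
  ultimately show ?thesis
    unfolding p_def by linarith
qed

end

theorem mainTheorem11:
  fixes V :: "'a set" and E :: "('a \<times> 'a) set" and w :: "'a \<Rightarrow> 'a \<Rightarrow> real"
    and h k :: nat and \<epsilon> c :: real
  assumes G: "weighted_graph V E w"
    and h: "h \<ge> 1" and k: "k \<ge> 1" and eps: "\<epsilon> > 0" and c: "c \<ge> 1"
  shows "measure_pmf.prob
           (sample_set V (min ((c + 2) * log 2 (real (card V)) / real h) 1))
           {S. \<forall>dt :: 'a \<Rightarrow> 'a \<Rightarrow> ereal. \<forall>E' :: ('a \<times> 'a) set.
               (\<forall>s\<in>S. \<forall>v\<in>V.
                  gdist V E (\<lambda>x y. ereal (w x y)) s v \<le> dt s v \<and>
                  dt s v \<le> ereal (1 + \<epsilon>) * hop_dist V E (\<lambda>x y. ereal (w x y)) (2 * h) s v) \<longrightarrow>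
               is_spanner S
                 {(s, s'). s \<in> S \<and> s' \<in> S \<and> s \<noteq> s' \<and> min (dt s s') (dt s' s) < \<infinity>}
                 (\<lambda>s s'. min (dt s s') (dt s' s)) E' (ereal (2 * real k - 1)) \<longrightarrow>
               (\<forall>s\<in>S. \<forall>v\<in>V.
                  gdist V E (\<lambda>x y. ereal (w x y)) s v
                    \<le> (INF s'\<in>S. gdist S E' (\<lambda>s s'. min (dt s s') (dt s' s)) s s' + dt s' v) \<and>
                  (INF s'\<in>S. gdist S E' (\<lambda>s s'. min (dt s s') (dt s' s)) s s' + dt s' v)
                    \<le> ereal ((2 * real k - 1) * (1 + \<epsilon>)) * gdist V E (\<lambda>x y. ereal (w x y)) s v)}
         \<ge> 1 - real (card V) powr (- c)"
proof -
  let ?w = "\<lambda>x y. ereal (w x y)"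
  have w: "\<forall>(x, y) \<in> E. w x y = w y x \<and> 0 < w x y" and "sym E"
    using G unfolding weighted_graph_def by auto
  interpret graph: nonneg_weighted_graph V E ?w
    by unfold_locales (use G w in \<open>auto simp: weighted_graph_def nonneg_weights_def\<close>)
  have w_sym: "\<And>x y. (x, y) \<in> E \<Longrightarrow> ?w x y = ?w y x"
    using w by auto
  have "h \<le> 2 * h" "1 \<le> 2 * real k - 1" "0 < 1 + \<epsilon>"
    using k eps by auto
  note stretch = graph.estimate_spanner_stretch[OF \<open>sym E\<close> w_sym _ this]
  have "-2 \<le> c"
    using c by simp
  note success = graph.prob_hits_windows[OF h this]
  show ?thesis
    by (rule order.trans[OF success measure_pmf.finite_measure_mono[OF subsetI]],
        rule CollectI, rule stretch) simp_all
qed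

end
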